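(* Let $G$ be a distance-regular graph of diameter $3$ with intersection numbers satisfying $a_1=c_2$, which is a strongly Deza graph, and let $G'$ be a graph cospectral with $G$. If $G'$ is a Deza graph, then $G'$ is a strongly Deza graph and one of the following holds: (i) $G'$ is distance-regular with the same intersection numbers as $G$; (ii) the Deza parameters $(b,a)$ of $G'$ differ from those of $G$ (which are $(c_2,0)$).
   Context: All graphs are finite, simple and undirected; eigenvalues of a graph are those of its adjacency matrix; two graphs are cospectral if their adjacency matrices have the same multiset of eigenvalues. A Deza graph with parameters $(n,k,b,a)$, where $b\geqslant a$, is a $k$-regular graph on $n$ vertices, which is neither complete nor edgeless, such that any two distinct vertices have exactly $b$ or exactly $a$ common neighbours. If $b>a$, the children $G_A$ and $G_B$ of $G$ are the graphs on the vertex set of $G$ in which two distinct vertices are adjacent if and only if they have exactly $a$ (for $G_A$), respectively exactly $b$ (for $G_B$), common neighbours in $G$; if $b=a$, $G_A$ is the complete graph and $G_B$ is the edgeless graph. A strongly regular graph with parameters $(n,k,\lambda,\mu)$ is a $k$-regular graph on $n$ vertices, neither complete nor edgeless, in which any two adjacent vertices have exactly $\lambda$ common neighbours and any two distinct non-adjacent vertices have exactly $\mu$ common neighbours (disconnected examples, i.e. disjoint unions of at least two cliques of equal size, are allowed). A strongly Deza graph is a Deza graph both of whose children are strongly regular graphs. A connected graph $G=(V,E)$ of diameter $d$ is distance-regular if there are numbers $a_i,b_i,c_i$ ($0\leqslant i\leqslant d$), its intersection numbers, such that for all $x,y\in V$ at distance $i$, the vertex $y$ has exactly $b_i$ neighbours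 at distance $i+1$ from $x$, $a_i$ neighbours at distance $i$ from $x$, and $c_i$ neighbours at distance $i-1$ from $x$. A distance-regular graph of diameter $3$ with $a_1=c_2$ is a Deza graph with parameters $(n,k,c_2,0)$. *)

theory Defs
  imports "Jordan_Normal_Form.Char_Poly" "HOL-Library.Multiset"
begin

definition simple_graph :: "nat \<Rightarrow> (nat \<Rightarrow> nat \<Rightarrow> bool) \<Rightarrow> bool" where
  "simple_graph n E \<longleftrightarrow> (\<forall>x y. E x y \<longrightarrow> x < n \<and> y < n \<and> E y x \<and> x \<noteq> y)"

definition adj_matrix :: "nat \<Rightarrow> (nat \<Rightarrow> nat \<Rightarrow> bool) \<Rightarrow> complex mat" where
  "adj_matrix n E = mat n n (\<lambda>(i, j). if E i j then 1 else 0)"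

definition eigenvalue_mset :: "complex mat \<Rightarrow> complex multiset" where
  "eigenvalue_mset A = Abs_multiset (\<lambda>x. order x (char_poly A))"

definition cospectral :: "nat \<Rightarrow> (nat \<Rightarrow> nat \<Rightarrow> bool) \<Rightarrow> nat \<Rightarrow> (nat \<Rightarrow> nat \<Rightarrow> bool) \<Rightarrow> bool" where
  "cospectral n E n' E' \<longleftrightarrow>
     eigenvalue_mset (adj_matrix n E) = eigenvalue_mset (adj_matrix n' E')"

definition common_nbrs :: "nat \<Rightarrow> (nat \<Rightarrow> nat \<Rightarrow> bool) \<Rightarrow> nat \<Rightarrow> nat \<Rightarrow> nat" where
  "common_nbrs n E x y = card {z. z < n \<and> E x z \<and> E y z}"

definition regular :: "nat \<Rightarrow> (nat \<Rightarrow> nat \<Rightarrow> bool) \<Rightarrow> nat \<Rightarrow> bool" where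
  "regular n E k \<longleftrightarrow> (\<forall>x<n. card {y. y < n \<and> E x y} = k)"

definition complete_graph :: "nat \<Rightarrow> (nat \<Rightarrow> nat \<Rightarrow> bool) \<Rightarrow> bool" where
  "complete_graph n E \<longleftrightarrow> (\<forall>x<n. \<forall>y<n. x \<noteq> y \<longrightarrow> E x y)"

definition edgeless :: "nat \<Rightarrow> (nat \<Rightarrow> nat \<Rightarrow> bool) \<Rightarrow> bool" where
  "edgeless n E \<longleftrightarrow> (\<forall>x<n. \<forall>y<n. \<not> E x y)"

definition deza :: "nat \<Rightarrow> (nat \<Rightarrow> nat \<Rightarrow> bool) \<Rightarrow> nat \<Rightarrow> nat \<Rightarrow> nat \<Rightarrow> bool" where
  "deza n E k b a \<longleftrightarrow> simple_graph n E \<and> b \<ge> a \<and> regular n E k \<and>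
     \<not> complete_graph n E \<and> \<not> edgeless n E \<and>
     (\<forall>x<n. \<forall>y<n. x \<noteq> y \<longrightarrow> common_nbrs n E x y = b \<or> common_nbrs n E x y = a)"

definition childA :: "nat \<Rightarrow> (nat \<Rightarrow> nat \<Rightarrow> bool) \<Rightarrow> nat \<Rightarrow> nat \<Rightarrow> nat \<Rightarrow> nat \<Rightarrow> bool" where
  "childA n E b a x y \<longleftrightarrow> x < n \<and> y < n \<and> x \<noteq> y \<and>
     (if b > a then common_nbrs n E x y = a else True)"

definition childB :: "nat \<Rightarrow> (nat \<Rightarrow> nat \<Rightarrow> bool) \<Rightarrow> nat \<Rightarrow> nat \<Rightarrow> nat \<Rightarrow> nat \<Rightarrow> bool" where
  "childB n E b a x y \<longleftrightarrow> x < n \<and> y < n \<and> x \<noteq> y \<and>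
     (if b > a then common_nbrs n E x y = b else False)"

text \<open>Strongly regular graph with parameters (n,k,lambda,mu) (disconnected ones allowed).\<close>
definition srg :: "nat \<Rightarrow> (nat \<Rightarrow> nat \<Rightarrow> bool) \<Rightarrow> nat \<Rightarrow> nat \<Rightarrow> nat \<Rightarrow> bool" where
  "srg n E k l m \<longleftrightarrow> simple_graph n E \<and> regular n E k \<and>
     \<not> complete_graph n E \<and> \<not> edgeless n E \<and>
     (\<forall>x<n. \<forall>y<n. E x y \<longrightarrow> common_nbrs n E x y = l) \<and>
     (\<forall>x<n. \<forall>y<n. x \<noteq> y \<longrightarrow> \<not> E x y \<longrightarrow> common_nbrs n E x y = m)"

definition strongly_regular :: "nat \<Rightarrow> (nat \<Rightarrow> nat \<Rightarrow> bool) \<Rightarrow> bool" where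
  "strongly_regular n E \<longleftrightarrow> (\<exists>k l m. srg n E k l m)"

definition strongly_deza :: "nat \<Rightarrow> (nat \<Rightarrow> nat \<Rightarrow> bool) \<Rightarrow> nat \<Rightarrow> nat \<Rightarrow> nat \<Rightarrow> bool" where
  "strongly_deza n E k b a \<longleftrightarrow> deza n E k b a \<and>
     strongly_regular n (childA n E b a) \<and> strongly_regular n (childB n E b a)"

fun walk :: "nat \<Rightarrow> (nat \<Rightarrow> nat \<Rightarrow> bool) \<Rightarrow> nat \<Rightarrow> nat \<Rightarrow> nat \<Rightarrow> bool" where
  "walk n E 0 x y \<longleftrightarrow> x = y"
| "walk n E (Suc m) x y \<longleftrightarrow> (\<exists>z<n. E x z \<and> walk n E m z y)"

definition gdist :: "nat \<Rightarrow> (nat \<Rightarrow> nat \<Rightarrow> bool) \<Rightarrow> nat \<Rightarrow> nat \<Rightarrow> nat" where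
  "gdist n E x y = (LEAST m. walk n E m x y)"

definition connected_graph :: "nat \<Rightarrow> (nat \<Rightarrow> nat \<Rightarrow> bool) \<Rightarrow> bool" where
  "connected_graph n E \<longleftrightarrow> n > 0 \<and> (\<forall>x<n. \<forall>y<n. \<exists>m. walk n E m x y)"

definition has_diameter :: "nat \<Rightarrow> (nat \<Rightarrow> nat \<Rightarrow> bool) \<Rightarrow> nat \<Rightarrow> bool" where
  "has_diameter n E d \<longleftrightarrow> connected_graph n E \<and>
     (\<forall>x<n. \<forall>y<n. gdist n E x y \<le> d) \<and> (\<exists>x<n. \<exists>y<n. gdist n E x y = d)"

definition distance_regular ::
  "nat \<Rightarrow> (nat \<Rightarrow> nat \<Rightarrow> bool) \<Rightarrow> nat \<Rightarrow> (nat \<Rightarrow> nat) \<Rightarrow> (nat \<Rightarrow> nat) \<Rightarrow> (nat \<Rightarrow> nat) \<Rightarrow> bool" where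
  "distance_regular n E d ai bi ci \<longleftrightarrow> simple_graph n E \<and> has_diameter n E d \<and>
     (\<forall>x<n. \<forall>y<n. let i = gdist n E x y in
        card {z. z < n \<and> E y z \<and> gdist n E x z = i + 1} = bi i \<and>
        card {z. z < n \<and> E y z \<and> gdist n E x z = i} = ai i \<and>
        card {z. z < n \<and> E y z \<and> gdist n E x z + 1 = i} = ci i)"

end

theory Submission
  imports Defs "Jordan_Normal_Form.Schur_Decomposition"
begin

(* Cospectral graphs have the same number of vertices and the same number of closed walks of
   every length, these being the traces of the powers of the adjacency matrix. For two k-regular
   graphs on n vertices this determines the sum over all pairs x, y of (p(A)_xy - g)^2 for every
   polynomial p and constant g, so an identity p(A) = g J transfers from one graph to the other.

   For a Deza graph, A^2 is an affine combination of I, J and the adjacency matrix of a child, so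
   the strongly Deza property of G is the identity A^4 = p A^2 + q I + r J. It transfers to G',
   and there it says that the children of G', whose adjacency matrices are again affine in A'^2,
   are strongly regular.

   If G' has the parameters (c_2, 0) of G, the count n k c_2 of closed 3-walks forces every edge
   of G' into exactly c_2 triangles, and the cubic identity in A encoding the intersection numbers
   b_2 and a_3 of G transfers as well. Reading distances 2 and 3 off the number of common
   neighbours then shows that G' is distance-regular with the intersection numbers of G. *)

section \<open>Traces of matrix powers\<close>

lemma sum_eq_single:
  assumes "finite A" "i \<in> A" "\<And>j. j \<in> A \<Longrightarrow> j \<noteq> i \<Longrightarrow> f j = 0"
  shows "sum f A = f i"
proof -
  have "sum f A = f i + sum f (A - {i})" using assms by (simp add: sum.remove)
  also have "sum f (A - {i}) = 0" using assms by (intro sum.neutral) auto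
  finally show ?thesis by simp
qed

definition mat_trace :: "'a::comm_ring_1 mat \<Rightarrow> 'a" where
  "mat_trace A = (\<Sum>i<dim_row A. A $$ (i,i))"

lemma mat_trace_mult_comm:
  assumes "X \<in> carrier_mat n n" "Y \<in> carrier_mat n n"
  shows "mat_trace (X * Y) = mat_trace (Y * X)"
proof -
  have "mat_trace (X * Y) = (\<Sum>i<n. \<Sum>j<n. X $$ (i,j) * Y $$ (j,i))"
    using assms by (simp add: mat_trace_def scalar_prod_def atLeast0LessThan)
  also have "\<dots> = (\<Sum>j<n. \<Sum>i<n. Y $$ (j,i) * X $$ (i,j))"
    by (subst sum.swap) (simp add: mult.commute)
  also have "\<dots> = mat_trace (Y * X)"
    using assms by (simp add: mat_trace_def scalar_prod_def atLeast0LessThan)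
  finally show ?thesis .
qed

lemma upper_triangular_mult:
  assumes "B \<in> carrier_mat n n" "C \<in> carrier_mat n n" "upper_triangular B" "upper_triangular C"
  shows "upper_triangular (B * C) \<and> (\<forall>i<n. (B * C) $$ (i,i) = B $$ (i,i) * C $$ (i,i))"
proof (intro conjI allI impI upper_triangularI)
  fix i j assume ji: "j < i" and i: "i < dim_row (B * C)"
  then have "(B * C) $$ (i,j) = (\<Sum>k<n. B $$ (i,k) * C $$ (k,j))"
    using assms by (simp add: scalar_prod_def atLeast0LessThan)
  also have "\<dots> = 0"
  proof (rule sum.neutral, intro ballI)
    fix k assume k: "k \<in> {..<n}"
    show "B $$ (i,k) * C $$ (k,j) = 0"
    proof (cases "k < i")
      case True
      then show ?thesis using assms(1,3) i by (simp add: upper_triangularD)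
    next
      case False
      then show ?thesis using assms(2,4) k ji by (simp add: upper_triangularD)
    qed
  qed
  finally show "(B * C) $$ (i,j) = 0" .
next
  fix i assume i: "i < n"
  have "(B * C) $$ (i,i) = (\<Sum>k<n. B $$ (i,k) * C $$ (k,i))"
    using assms i by (simp add: scalar_prod_def atLeast0LessThan)
  also have "\<dots> = B $$ (i,i) * C $$ (i,i)"
  proof (rule sum_eq_single)
    fix k assume k: "k \<in> {..<n}" "k \<noteq> i"
    show "B $$ (i,k) * C $$ (k,i) = 0"
    proof (cases "k < i")
      case True
      then show ?thesis using assms(1,3) i by (simp add: upper_triangularD)
    next
      case False
      then show ?thesis using assms(2,4) k by (simp add: upper_triangularD)
    qed
  qed (use i in auto)
  finally show "(B * C) $$ (i,i) = B $$ (i,i) * C $$ (i,i)" .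
qed

lemma upper_triangular_power:
  assumes "B \<in> carrier_mat n n" "upper_triangular B"
  shows "upper_triangular (B ^\<^sub>m m) \<and> (\<forall>i<n. (B ^\<^sub>m m) $$ (i,i) = B $$ (i,i) ^ m)"
proof (induction m)
  case 0
  then show ?case using assms by auto
next
  case (Suc m)
  have "B ^\<^sub>m m \<in> carrier_mat n n" using assms by auto
  then show ?case
    using upper_triangular_mult[OF _ assms(1) _ assms(2)] Suc by (auto simp: power_commutes)
qed

lemma order_prod_linear_factors:
  "Polynomial.order x (\<Prod>a\<leftarrow>es. [:- a, 1:]) = count (mset es) (x::'a::idom)"
proof (induction es)
  case Nil
  then show ?case by simp
next
  case (Cons a es)
  have "(\<Prod>a\<leftarrow>es. [:- a, 1:]) \<noteq> (0::'a poly)"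
    by (auto simp: prod_list_zero_iff)
  then have "Polynomial.order x ([:- a, 1:] * (\<Prod>a\<leftarrow>es. [:- a, 1:]))
      = Polynomial.order x [:- a, 1:] + Polynomial.order x (\<Prod>a\<leftarrow>es. [:- a, 1:])"
    by (intro order_mult no_zero_divisors) simp_all
  moreover have "Polynomial.order x [:- a, 1:] = (if x = a then 1 else 0)"
    using order_power_n_n[of a 1] by (auto intro: order_0I)
  ultimately show ?case using Cons by simp
qed

lemma mat_trace_power_similar:
  assumes A: "A \<in> carrier_mat n n" and sw: "similar_mat_wit A B P Q"
  shows "mat_trace (A ^\<^sub>m m) = mat_trace (B ^\<^sub>m m)"
proof -
  note D = similar_mat_witD2[OF A sw]
  have Bm: "B ^\<^sub>m m \<in> carrier_mat n n" using D by auto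
  have "A ^\<^sub>m m = P * ((B ^\<^sub>m m) * Q)"
    using similar_mat_wit_pow_id[OF sw] assoc_mult_mat[OF D(6) Bm D(7)] by simp
  then have "mat_trace (A ^\<^sub>m m) = mat_trace (P * ((B ^\<^sub>m m) * Q))" by simp
  also have "\<dots> = mat_trace (((B ^\<^sub>m m) * Q) * P)"
    by (rule mat_trace_mult_comm[OF D(6)]) (use Bm D in auto)
  also have "((B ^\<^sub>m m) * Q) * P = B ^\<^sub>m m"
    using assoc_mult_mat[OF Bm D(7) D(6)] D(2) Bm by (simp add: right_mult_one_mat)
  finally show ?thesis .
qed

lemma mat_trace_upper_triangular_power:
  assumes "B \<in> carrier_mat n n" "upper_triangular B"
  shows "mat_trace (B ^\<^sub>m m) = (\<Sum>e\<leftarrow>diag_mat B. e ^ m)"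
proof -
  have "mat_trace (B ^\<^sub>m m) = (\<Sum>i<n. B $$ (i,i) ^ m)"
    using upper_triangular_power[OF assms, of m] assms(1) unfolding mat_trace_def by simp
  also have "\<dots> = (\<Sum>e\<leftarrow>diag_mat B. e ^ m)"
    using assms(1) unfolding diag_mat_def
    by (simp add: interv_sum_list_conv_sum_set_nat atLeast0LessThan comp_def)
  finally show ?thesis .
qed

lemma eigenvalue_mset_power_sums:
  fixes A :: "complex mat"
  assumes A: "A \<in> carrier_mat n n"
  obtains es where "length es = n" "eigenvalue_mset A = mset es"
    "\<And>m. mat_trace (A ^\<^sub>m m) = (\<Sum>e\<leftarrow>es. e ^ m)"
proof -
  obtain es where cp: "char_poly A = (\<Prod>a\<leftarrow>es. [:- a, 1:])" and len: "length es = n"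
    using char_poly_factorized[OF A] by auto
  have "eigenvalue_mset A = mset es"
    unfolding eigenvalue_mset_def cp order_prod_linear_factors by (simp add: count_inverse)
  moreover obtain B P Q where "schur_decomposition A es = (B,P,Q)"
    by (cases "schur_decomposition A es") auto
  with schur_decomposition[OF A cp] have "similar_mat_wit A B P Q"
    and "upper_triangular B" and "diag_mat B = es" by auto
  then have "mat_trace (A ^\<^sub>m m) = (\<Sum>e\<leftarrow>es. e ^ m)" for m
    using mat_trace_power_similar[OF A] mat_trace_upper_triangular_power
      similar_mat_witD2(5)[OF A] by metis
  ultimately show ?thesis using that len by blast
qed

section \<open>Counting walks\<close>

fun walk_count :: "nat \<Rightarrow> (nat \<Rightarrow> nat \<Rightarrow> bool) \<Rightarrow> nat \<Rightarrow> nat \<Rightarrow> nat \<Rightarrow> real" where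
  "walk_count n E 0 x y = of_bool (x = y)"
| "walk_count n E (Suc m) x y = (\<Sum>z<n. walk_count n E m x z * of_bool (E z y))"

definition closed_walks :: "nat \<Rightarrow> (nat \<Rightarrow> nat \<Rightarrow> bool) \<Rightarrow> nat \<Rightarrow> real" where
  "closed_walks n E m = (\<Sum>x<n. walk_count n E m x x)"

lemma adj_matrix_carrier: "adj_matrix n E \<in> carrier_mat n n"
  by (simp add: adj_matrix_def)

lemma adj_matrix_power_entry:
  assumes "x < n" "y < n"
  shows "(adj_matrix n E ^\<^sub>m m) $$ (x,y) = complex_of_real (walk_count n E m x y)"
  using assms
proof (induction m arbitrary: y)
  case 0
  then show ?case by (simp add: adj_matrix_def)
next
  case (Suc m)
  have "(adj_matrix n E ^\<^sub>m Suc m) $$ (x,y)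
      = (\<Sum>z<n. (adj_matrix n E ^\<^sub>m m) $$ (x,z) * adj_matrix n E $$ (z,y))"
    using Suc.prems adj_matrix_carrier[of n E]
    by (simp add: scalar_prod_def atLeast0LessThan adj_matrix_def)
  also have "\<dots> = (\<Sum>z<n. complex_of_real (walk_count n E m x z * of_bool (E z y)))"
    using Suc by (intro sum.cong) (auto simp: adj_matrix_def)
  also have "\<dots> = complex_of_real (walk_count n E (Suc m) x y)"
    by (simp only: walk_count.simps of_real_sum)
  finally show ?case .
qed

lemma mat_trace_adj_matrix_power:
  "mat_trace (adj_matrix n E ^\<^sub>m m) = complex_of_real (closed_walks n E m)"
proof -
  have "mat_trace (adj_matrix n E ^\<^sub>m m) = (\<Sum>x<n. complex_of_real (walk_count n E m x x))"
    using adj_matrix_carrier[of n E] by (simp add: mat_trace_def adj_matrix_power_entry)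
  then show ?thesis by (simp add: closed_walks_def)
qed

lemma cospectral_closed_walks:
  assumes "cospectral n E n' E'"
  shows "n = n'" and "closed_walks n E m = closed_walks n' E' m"
proof -
  obtain es where es: "length es = n" "eigenvalue_mset (adj_matrix n E) = mset es"
    "\<And>m. mat_trace (adj_matrix n E ^\<^sub>m m) = (\<Sum>e\<leftarrow>es. e ^ m)"
    using eigenvalue_mset_power_sums[OF adj_matrix_carrier[of n E]] by blast
  obtain es' where es': "length es' = n'" "eigenvalue_mset (adj_matrix n' E') = mset es'"
    "\<And>m. mat_trace (adj_matrix n' E' ^\<^sub>m m) = (\<Sum>e\<leftarrow>es'. e ^ m)"
    using eigenvalue_mset_power_sums[OF adj_matrix_carrier[of n' E']] by blast
  have ms: "mset es = mset es'" using assms es es' by (simp add: cospectral_def)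
  then show "n = n'" using es es' by (metis size_mset)
  have "(\<Sum>e\<leftarrow>es. e ^ m) = (\<Sum>e\<leftarrow>es'. e ^ m)"
    using ms by (metis mset_map sum_mset_sum_list)
  then show "closed_walks n E m = closed_walks n' E' m"
    using es(3) es'(3) mat_trace_adj_matrix_power by (metis of_real_eq_iff)
qed

lemma walk_count_outside:
  assumes "simple_graph n E" "\<not> y < n"
  shows "walk_count n E (Suc m) x y = 0"
  using assms by (auto simp: simple_graph_def intro!: sum.neutral)

lemma walk_count_one:
  assumes "x < n"
  shows "walk_count n E 1 x y = of_bool (E x y)"
  using assms by (simp add: sum_eq_single[of "{..<n}" x] del: sum_mult_of_bool_eq)

lemma walk_count_add:
  assumes sg: "simple_graph n E" and x: "x < n"
  shows "walk_count n E (i + j) x y = (\<Sum>z<n. walk_count n E i x z * walk_count n E j z y)"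
proof (induction j arbitrary: y)
  case 0
  show ?case
  proof (cases "y < n")
    case True
    then show ?thesis by (simp add: sum_eq_single[of "{..<n}" y])
  next
    case False
    have "walk_count n E i x y = 0"
    proof (cases i)
      case 0
      then show ?thesis using x False by simp
    next
      case (Suc j)
      then show ?thesis using walk_count_outside[OF sg False] by metis
    qed
    then show ?thesis using False by simp
  qed
next
  case (Suc j)
  have "walk_count n E (i + Suc j) x y
      = (\<Sum>w<n. \<Sum>z<n. walk_count n E i x z * walk_count n E j z w * of_bool (E w y))"
    by (simp add: Suc sum_distrib_right del: sum_mult_of_bool_eq)
  also have "\<dots> = (\<Sum>z<n. \<Sum>w<n. walk_count n E i x z * (walk_count n E j z w * of_bool (E w y)))"
    by (subst sum.swap) (simp add: mult.assoc)
  also have "\<dots> = (\<Sum>z<n. walk_count n E i x z * walk_count n E (Suc j) z y)"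
    by (simp add: sum_distrib_left del: sum_mult_of_bool_eq)
  finally show ?case .
qed

lemma walk_count_Suc_left:
  assumes "simple_graph n E" "x < n"
  shows "walk_count n E (Suc m) x y = (\<Sum>z<n. of_bool (E x z) * walk_count n E m z y)"
proof -
  have "walk_count n E (Suc m) x y = (\<Sum>z<n. walk_count n E 1 x z * walk_count n E m z y)"
    using walk_count_add[OF assms, of 1 m y] by simp
  then show ?thesis by (simp only: walk_count_one[OF assms(2)])
qed

lemma walk_count_sym:
  assumes sg: "simple_graph n E" and "x < n" "y < n"
  shows "walk_count n E m x y = walk_count n E m y x"
  using assms(2,3)
proof (induction m arbitrary: x y)
  case 0
  then show ?case by auto
next
  case (Suc m)
  have "walk_count n E (Suc m) x y = (\<Sum>z<n. walk_count n E m x z * of_bool (E z y))" by simp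
  also have "\<dots> = (\<Sum>z<n. of_bool (E y z) * walk_count n E m z x)"
    using Suc sg by (intro sum.cong) (auto simp: simple_graph_def)
  also have "\<dots> = walk_count n E (Suc m) y x" using walk_count_Suc_left[OF sg Suc.prems(2)] by simp
  finally show ?case .
qed

lemma real_card_eq_sum_of_bool: "real (card {z. z < (n::nat) \<and> Q z}) = (\<Sum>z<n. of_bool (Q z))"
proof -
  have "{z. z < n \<and> Q z} = {..<n} \<inter> {z. Q z}" by auto
  then show ?thesis by simp
qed

lemma regular_sum_adj:
  assumes "regular n E k" "x < n"
  shows "(\<Sum>y<n. of_bool (E x y) :: real) = real k"
  using assms by (simp add: regular_def real_card_eq_sum_of_bool[symmetric] del: sum_of_bool_eq)

lemma sum_sum_adj_const:
  assumes "regular n E k"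
  shows "(\<Sum>x<n. \<Sum>z<n. of_bool (E x z) * r) = real n * real k * r"
  using regular_sum_adj[OF assms] by (simp add: sum_distrib_right[symmetric] del: sum_of_bool_eq)

lemma walk_count_row_sum:
  assumes reg: "regular n E k" and x: "x < n"
  shows "(\<Sum>y<n. walk_count n E m x y) = real k ^ m"
proof (induction m)
  case 0
  then show ?case using x by (simp add: sum_eq_single[of "{..<n}" x])
next
  case (Suc m)
  have "(\<Sum>y<n. walk_count n E (Suc m) x y) = (\<Sum>z<n. walk_count n E m x z * (\<Sum>y<n. of_bool (E z y)))"
    by (simp add: sum_distrib_left del: sum_mult_of_bool_eq sum_of_bool_eq) (rule sum.swap)
  also have "\<dots> = (\<Sum>z<n. walk_count n E m x z * real k)"
    using regular_sum_adj[OF reg] by (intro sum.cong) (auto simp del: sum_of_bool_eq)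
  also have "\<dots> = real k ^ Suc m" using Suc by (simp add: sum_distrib_right[symmetric])
  finally show ?case .
qed

lemma walk_count_col_sum:
  assumes sg: "simple_graph n E" and reg: "regular n E k" and y: "y < n"
  shows "(\<Sum>x<n. walk_count n E m x y) = real k ^ m"
  using walk_count_row_sum[OF reg y] walk_count_sym[OF sg _ y]
  by (metis (no_types, lifting) lessThan_iff sum.cong)

lemma walk_count_two:
  assumes sg: "simple_graph n E" and "x < n" "y < n"
  shows "walk_count n E 2 x y = real (common_nbrs n E x y)"
proof -
  have "walk_count n E 2 x y = (\<Sum>z<n. walk_count n E 1 x z * walk_count n E 1 z y)"
    using walk_count_add[OF sg assms(2), of 1 1] by (simp add: numeral_2_eq_2)
  also have "\<dots> = (\<Sum>z<n. of_bool (E x z \<and> E y z))"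
    using sg unfolding simple_graph_def
    by (intro sum.cong refl) (auto simp: walk_count_one[OF assms(2)] walk_count_one)
  also have "\<dots> = real (common_nbrs n E x y)"
    by (simp add: common_nbrs_def real_card_eq_sum_of_bool del: sum_of_bool_eq)
  finally show ?thesis .
qed

lemma sum_adj_adj_eq_common_nbrs:
  assumes "simple_graph n E" "x < n" "y < n"
  shows "(\<Sum>z<n. of_bool (E x z) * of_bool (E z y)) = real (common_nbrs n E x y)"
proof -
  have "(\<Sum>z<n. of_bool (E x z) * of_bool (E z y))
      = (\<Sum>z<n. walk_count n E 1 x z * walk_count n E 1 z y)"
    using assms(2) by (intro sum.cong refl) (simp only: walk_count_one lessThan_iff)
  also have "\<dots> = walk_count n E 2 x y"
    using walk_count_add[OF assms(1,2), of 1 1 y] by (simp add: numeral_2_eq_2)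
  finally show ?thesis using walk_count_two[OF assms] by simp
qed

lemma common_nbrs_self: "regular n E k \<Longrightarrow> x < n \<Longrightarrow> common_nbrs n E x x = k"
  unfolding regular_def common_nbrs_def by simp

lemma common_nbrs_sym: "common_nbrs n E x y = common_nbrs n E y x"
  unfolding common_nbrs_def by (rule arg_cong[where f=card]) auto

lemma closed_walks_two:
  assumes "simple_graph n E" "regular n E k"
  shows "closed_walks n E 2 = real n * real k"
  using assms by (simp add: closed_walks_def walk_count_two common_nbrs_self)

lemma regular_degree_eq_of_closed_walks:
  assumes "simple_graph n E" "regular n E k" "simple_graph n E'" "regular n E' k'"
    and "closed_walks n E 2 = closed_walks n E' 2" and "0 < n"
  shows "k = k'"
  using closed_walks_two[OF assms(1,2)] closed_walks_two[OF assms(3,4)] assms(5,6) by simp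

lemma closed_walks_three:
  assumes sg: "simple_graph n E"
  shows "closed_walks n E 3 = (\<Sum>x<n. \<Sum>z<n. of_bool (E x z) * real (common_nbrs n E x z))"
  unfolding closed_walks_def
proof (intro sum.cong refl)
  fix x assume x: "x \<in> {..<n}"
  have "walk_count n E 3 x x = (\<Sum>z<n. walk_count n E 2 x z * walk_count n E 1 z x)"
    using walk_count_add[OF sg, of x 2 1] x by simp
  also have "\<dots> = (\<Sum>z<n. of_bool (E x z) * real (common_nbrs n E x z))"
    using sg x unfolding simple_graph_def
    by (intro sum.cong refl) (auto simp: walk_count_two[OF sg] walk_count_one)
  finally show "walk_count n E 3 x x = (\<Sum>z<n. of_bool (E x z) * real (common_nbrs n E x z))" .
qed

section \<open>Transferring polynomial identities between regular graphs\<close>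

definition walk_poly :: "nat \<Rightarrow> (nat \<Rightarrow> nat \<Rightarrow> bool) \<Rightarrow> (nat \<Rightarrow> real) \<Rightarrow> nat \<Rightarrow> nat \<Rightarrow> nat \<Rightarrow> real" where
  "walk_poly n E c d x y = (\<Sum>i<d. c i * walk_count n E i x y)"

lemma sum_walk_poly_square:
  assumes sg: "simple_graph n E"
  shows "(\<Sum>x<n. \<Sum>y<n. walk_poly n E c d x y * walk_poly n E c d x y)
    = (\<Sum>i<d. \<Sum>j<d. c i * c j * closed_walks n E (i + j))"
proof -
  let ?w = "walk_count n E"
  have "(\<Sum>x<n. \<Sum>y<n. walk_poly n E c d x y * walk_poly n E c d x y)
      = (\<Sum>x<n. \<Sum>y<n. \<Sum>i<d. \<Sum>j<d. c i * c j * (?w i x y * ?w j y x))"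
  proof (intro sum.cong refl)
    fix x y assume "x \<in> {..<n}" "y \<in> {..<n}"
    then show "walk_poly n E c d x y * walk_poly n E c d x y
        = (\<Sum>i<d. \<Sum>j<d. c i * c j * (?w i x y * ?w j y x))"
      unfolding walk_poly_def sum_product using walk_count_sym[OF sg, of x y]
      by (simp add: algebra_simps)
  qed
  also have "\<dots> = (\<Sum>i<d. \<Sum>j<d. \<Sum>x<n. \<Sum>y<n. c i * c j * (?w i x y * ?w j y x))"
    by (subst (1 2) sum.swap, subst (2 3) sum.swap, rule refl)
  also have "\<dots> = (\<Sum>i<d. \<Sum>j<d. c i * c j * (\<Sum>x<n. \<Sum>y<n. ?w i x y * ?w j y x))"
    by (simp only: sum_distrib_left)
  also have "\<dots> = (\<Sum>i<d. \<Sum>j<d. c i * c j * closed_walks n E (i + j))"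
    unfolding closed_walks_def by (simp add: walk_count_add[OF sg])
  finally show ?thesis .
qed

lemma sum_walk_poly:
  assumes "regular n E k"
  shows "(\<Sum>x<n. \<Sum>y<n. walk_poly n E c d x y) = real n * (\<Sum>i<d. c i * real k ^ i)"
proof -
  have "(\<Sum>x<n. \<Sum>y<n. walk_poly n E c d x y) = (\<Sum>i<d. c i * (\<Sum>x<n. \<Sum>y<n. walk_count n E i x y))"
    unfolding walk_poly_def sum_distrib_left by (subst (1 2) sum.swap) (rule refl)
  also have "\<dots> = (\<Sum>i<d. c i * (\<Sum>x<n. real k ^ i))"
    by (simp add: walk_count_row_sum[OF assms])
  finally show ?thesis by (simp add: sum_distrib_left algebra_simps)
qed

text \<open>The left-hand side vanishes exactly when the matrix of the polynomial in the adjacency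
  matrix is constant; the right-hand side depends only on n, k and the closed walk counts.\<close>

lemma sum_walk_poly_minus_const_square:
  assumes "simple_graph n E" "regular n E k"
  shows "(\<Sum>x<n. \<Sum>y<n. (walk_poly n E c d x y - g)\<^sup>2) =
    (\<Sum>i<d. \<Sum>j<d. c i * c j * closed_walks n E (i + j))
      - 2 * g * (real n * (\<Sum>i<d. c i * real k ^ i)) + g\<^sup>2 * real n * real n"
proof -
  have "(\<Sum>x<n. \<Sum>y<n. (walk_poly n E c d x y - g)\<^sup>2) =
     (\<Sum>x<n. \<Sum>y<n. walk_poly n E c d x y * walk_poly n E c d x y)
       - 2 * g * (\<Sum>x<n. \<Sum>y<n. walk_poly n E c d x y) + (\<Sum>x<n. \<Sum>y<n. g\<^sup>2)"
    by (simp add: power2_eq_square algebra_simps sum.distrib sum_subtractf sum_distrib_left)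
  then show ?thesis using sum_walk_poly_square[OF assms(1)] sum_walk_poly[OF assms(2)] by simp
qed

lemma walk_poly_const_transfer:
  assumes "simple_graph n E" "regular n E k" "simple_graph n E'" "regular n E' k"
    and closed: "\<And>m. closed_walks n E m = closed_walks n E' m"
    and const: "\<And>x y. x < n \<Longrightarrow> y < n \<Longrightarrow> walk_poly n E c d x y = g"
    and "x < n" "y < n"
  shows "walk_poly n E' c d x y = g"
proof -
  have "(\<Sum>x<n. \<Sum>y<n. (walk_poly n E c d x y - g)\<^sup>2) = 0" using const by simp
  then have sq: "(\<Sum>x<n. \<Sum>y<n. (walk_poly n E' c d x y - g)\<^sup>2) = 0"
    using sum_walk_poly_minus_const_square[OF assms(1,2)]
      sum_walk_poly_minus_const_square[OF assms(3,4)] closed by simp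
  have "(\<Sum>y<n. (walk_poly n E' c d x y - g)\<^sup>2) = 0"
    using sq \<open>x < n\<close> by (subst (asm) sum_nonneg_eq_0_iff) (auto intro: sum_nonneg)
  then have "(walk_poly n E' c d x y - g)\<^sup>2 = 0"
    using \<open>y < n\<close> by (subst (asm) sum_nonneg_eq_0_iff) auto
  then show ?thesis by simp
qed

lemma common_nbrs_const_transfer:
  assumes sg: "simple_graph n E" and reg: "regular n E k"
    and sg': "simple_graph n E'" and reg': "regular n E' k"
    and closed: "\<And>m. closed_walks n E m = closed_walks n E' m"
    and const: "\<And>x y. x < n \<Longrightarrow> y < n \<Longrightarrow> x \<noteq> y \<Longrightarrow> common_nbrs n E x y = t"
    and "x < n" "y < n" "x \<noteq> y"
  shows "common_nbrs n E' x y = t"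
proof -
  define c where "c i = (if i = 0 then real t - real k else if i = 2 then 1 else 0)" for i :: nat
  have "walk_poly n E c 3 x y = real t" if "x < n" "y < n" for x y
    using that const[of x y] walk_count_two[OF sg that] common_nbrs_self[OF reg that(1)]
    by (cases "x = y") (auto simp: walk_poly_def eval_nat_numeral c_def)
  then have "walk_poly n E' c 3 x y = real t"
    using walk_poly_const_transfer[OF sg reg sg' reg' closed] assms(6-) by blast
  then show ?thesis using walk_count_two[OF sg' assms(7,8)] assms(9)
    by (simp add: walk_poly_def eval_nat_numeral c_def)
qed

lemma walk_count_four_quadratic_transfer:
  assumes sg: "simple_graph n E" and reg: "regular n E k"
    and sg': "simple_graph n E'" and reg': "regular n E' k"
    and closed: "\<And>m. closed_walks n E m = closed_walks n E' m"
    and quad: "\<And>x y. x < n \<Longrightarrow> y < n \<Longrightarrow>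
      walk_count n E 4 x y = p * walk_count n E 2 x y + q * of_bool (x = y) + r"
    and "x < n" "y < n"
  shows "walk_count n E' 4 x y = p * walk_count n E' 2 x y + q * of_bool (x = y) + r"
proof -
  define c where "c i = (if i = 0 then - q else if i = 2 then - p else if i = 4 then 1 else 0)"
    for i :: nat
  have "walk_poly n E c 5 x y = r" if "x < n" "y < n" for x y
    using quad[OF that] by (simp add: walk_poly_def eval_nat_numeral c_def)
  then have "walk_poly n E' c 5 x y = r"
    using walk_poly_const_transfer[OF sg reg sg' reg' closed] assms(7,8) by blast
  then show ?thesis by (simp add: walk_poly_def eval_nat_numeral c_def)
qed

section \<open>Strongly regular graphs and strongly Deza graphs\<close>

lemma quadratic_identity_affine:
  fixes F H :: "nat \<Rightarrow> nat \<Rightarrow> real"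
  assumes HF: "\<And>x y. x < n \<Longrightarrow> y < n \<Longrightarrow> H x y = u * F x y + v * of_bool (x = y) + w"
    and row: "\<And>x. x < n \<Longrightarrow> (\<Sum>z<n. F x z) = s"
    and col: "\<And>y. y < n \<Longrightarrow> (\<Sum>z<n. F z y) = s"
    and FF: "\<And>x y. x < n \<Longrightarrow> y < n \<Longrightarrow>
      (\<Sum>z<n. F x z * F z y) = p * F x y + q * of_bool (x = y) + r"
    and u: "u \<noteq> 0"
  shows "\<exists>p' q' r'. \<forall>x<n. \<forall>y<n.
    (\<Sum>z<n. H x z * H z y) = p' * H x y + q' * of_bool (x = y) + r'"
proof -
  define p' where "p' = u * p + 2 * v"
  define q' where "q' = u * u * q + v * v - p' * v"
  define r' where "r' = u * u * r + 2 * u * w * s + 2 * v * w + w * w * real n - p' * w"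
  have "(\<Sum>z<n. H x z * H z y) = p' * H x y + q' * of_bool (x = y) + r'"
    if x: "x < n" and y: "y < n" for x y
  proof -
    have "(\<Sum>z<n. H x z * H z y) = (\<Sum>z<n. u * u * (F x z * F z y) + u * v * (F x z * of_bool (z = y))
       + u * w * F x z + v * u * (of_bool (x = z) * F z y)
       + v * v * (of_bool (x = z) * of_bool (z = y)) + v * w * of_bool (x = z) + w * u * F z y + w * v * of_bool (z = y) + w * w)"
      using x y by (intro sum.cong refl) (simp add: HF algebra_simps del: of_bool_eq)
    also have "\<dots> = u * u * (\<Sum>z<n. F x z * F z y) + u * v * (\<Sum>z<n. F x z * of_bool (z = y))
       + u * w * (\<Sum>z<n. F x z) + v * u * (\<Sum>z<n. of_bool (x = z) * F z y)
       + v * v * (\<Sum>z<n. of_bool (x = z) * of_bool (z = y)) + v * w * (\<Sum>z<n. of_bool (x = z))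
       + w * u * (\<Sum>z<n. F z y) + w * v * (\<Sum>z<n. of_bool (z = y) :: real) + w * w * real n"
      by (simp only: sum.distrib sum_distrib_left[symmetric] sum_constant card_lessThan)
        (simp add: algebra_simps)
    also have "\<dots> = u * u * (p * F x y + q * of_bool (x = y) + r) + u * v * F x y + u * w * s
       + v * u * F x y + v * v * of_bool (x = y) + v * w + w * u * s + w * v + w * w * real n"
      using x y by (simp add: FF row col)
    also have "\<dots> = p' * H x y + q' * of_bool (x = y) + r'"
      using x y unfolding p'_def q'_def r'_def HF[OF x y] by (simp add: algebra_simps)
    finally show ?thesis .
  qed
  then show ?thesis by blast
qed

lemma strongly_regular_quadratic:
  assumes "strongly_regular n Z"
  obtains s p q r where
    "\<And>x. x < n \<Longrightarrow> (\<Sum>z<n. of_bool (Z x z) :: real) = s"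
    "\<And>y. y < n \<Longrightarrow> (\<Sum>z<n. of_bool (Z z y) :: real) = s"
    "\<And>x y. x < n \<Longrightarrow> y < n \<Longrightarrow>
      (\<Sum>z<n. of_bool (Z x z) * of_bool (Z z y) :: real)
        = p * of_bool (Z x y) + q * of_bool (x = y) + r"
proof -
  obtain k l m where S: "srg n Z k l m" using assms unfolding strongly_regular_def by blast
  then have sg: "simple_graph n Z" and reg: "regular n Z k" unfolding srg_def by auto
  have sym: "Z x y = Z y x" for x y using sg unfolding simple_graph_def by blast
  have row: "(\<Sum>z<n. of_bool (Z x z) :: real) = real k" if "x < n" for x
    using regular_sum_adj[OF reg that] .
  have col: "(\<Sum>z<n. of_bool (Z z y) :: real) = real k" if "y < n" for y
    using regular_sum_adj[OF reg that] by (simp only: sym)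
  have quad: "(\<Sum>z<n. of_bool (Z x z) * of_bool (Z z y) :: real)
      = (real l - real m) * of_bool (Z x y) + (real k - real m) * of_bool (x = y) + real m"
    if x: "x < n" and y: "y < n" for x y
  proof (cases "x = y")
    case True
    have "\<not> Z x x" using sg by (auto simp: simple_graph_def)
    then show ?thesis
      using sum_adj_adj_eq_common_nbrs[OF sg x y] common_nbrs_self[OF reg x] True by simp
  next
    case False
    then show ?thesis using sum_adj_adj_eq_common_nbrs[OF sg x y] S x y
      by (cases "Z x y") (auto simp: srg_def)
  qed
  show ?thesis by (rule that[OF row col quad])
qed

lemma strongly_regular_of_quadratic:
  assumes sg: "simple_graph n Z"
    and quad: "\<And>x y. x < n \<Longrightarrow> y < n \<Longrightarrow>
      real (common_nbrs n Z x y) = p * of_bool (Z x y) + q * of_bool (x = y) + r"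
    and edge: "a < n" "b < n" "Z a b" and non_edge: "c < n" "d < n" "c \<noteq> d" "\<not> Z c d"
  shows "strongly_regular n Z"
proof -
  have irrefl: "\<not> Z x x" for x using sg by (auto simp: simple_graph_def)
  have reg: "regular n Z (common_nbrs n Z a a)"
    unfolding regular_def
  proof (intro allI impI)
    fix x assume x: "x < n"
    have "real (common_nbrs n Z x x) = real (common_nbrs n Z a a)"
      using quad[OF x x] quad[OF edge(1) edge(1)] irrefl by simp
    then show "card {y. y < n \<and> Z x y} = common_nbrs n Z a a"
      by (simp add: common_nbrs_def)
  qed
  have "common_nbrs n Z x y = common_nbrs n Z a b" if "x < n" "y < n" "Z x y" for x y
  proof -
    have "x \<noteq> y" "a \<noteq> b" using that(3) edge(3) irrefl by auto
    then have "real (common_nbrs n Z x y) = real (common_nbrs n Z a b)"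
      using quad[OF that(1,2)] quad[OF edge(1,2)] that(3) edge(3) by simp
    then show ?thesis by simp
  qed
  moreover have "common_nbrs n Z x y = common_nbrs n Z c d"
    if "x < n" "y < n" "x \<noteq> y" "\<not> Z x y" for x y
  proof -
    have "real (common_nbrs n Z x y) = real (common_nbrs n Z c d)"
      using quad[OF that(1,2)] quad[OF non_edge(1,2)] that non_edge by simp
    then show ?thesis by simp
  qed
  moreover have "\<not> complete_graph n Z" "\<not> edgeless n Z"
    using edge non_edge unfolding complete_graph_def edgeless_def by blast+
  ultimately have "srg n Z (common_nbrs n Z a a) (common_nbrs n Z a b) (common_nbrs n Z c d)"
    unfolding srg_def using sg reg by blast
  then show ?thesis unfolding strongly_regular_def by blast
qed

lemma strongly_regular_of_affine_in_square:
  assumes sg: "simple_graph n E" and reg: "regular n E k"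
    and quad: "\<And>x y. x < n \<Longrightarrow> y < n \<Longrightarrow>
      walk_count n E 4 x y = p * walk_count n E 2 x y + q * of_bool (x = y) + r"
    and affine: "\<And>x y. x < n \<Longrightarrow> y < n \<Longrightarrow>
      of_bool (Z x y) = u * walk_count n E 2 x y + v * of_bool (x = y) + w"
    and "u \<noteq> 0" and sgZ: "simple_graph n Z"
    and "a < n" "b < n" "Z a b" and "c < n" "d < n" "c \<noteq> d" "\<not> Z c d"
  shows "strongly_regular n Z"
proof -
  have square: "(\<Sum>z<n. walk_count n E 2 x z * walk_count n E 2 z y) = walk_count n E 4 x y"
    if "x < n" for x y
    using walk_count_add[OF sg that, of 2 2 y] by simp
  have "\<exists>p' q' r'. \<forall>x<n. \<forall>y<n. (\<Sum>z<n. of_bool (Z x z) * of_bool (Z z y) :: real)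
       = p' * of_bool (Z x y) + q' * of_bool (x = y) + r'"
    by (rule quadratic_identity_affine[where F="walk_count n E 2" and s="real k ^ 2"])
      (use affine walk_count_row_sum[OF reg] walk_count_col_sum[OF sg reg] square quad
        \<open>u \<noteq> 0\<close> in auto)
  then obtain p' q' r' where
    "\<forall>x<n. \<forall>y<n. (\<Sum>z<n. of_bool (Z x z) * of_bool (Z z y) :: real)
       = p' * of_bool (Z x y) + q' * of_bool (x = y) + r'"
    by blast
  then show ?thesis
    using strongly_regular_of_quadratic[OF sgZ, of p' q' r'] sum_adj_adj_eq_common_nbrs[OF sgZ]
      assms(7-) by auto
qed

lemma simple_graph_childA: "simple_graph n (childA n E b a)"
  unfolding simple_graph_def childA_def using common_nbrs_sym by metis

lemma simple_graph_childB: "simple_graph n (childB n E b a)"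
  unfolding simple_graph_def childB_def using common_nbrs_sym by metis

lemma deza_walk_count_two:
  assumes sg: "simple_graph n E" and dz: "deza n E k b a" and ab: "a < b"
    and x: "x < n" and y: "y < n"
  shows "walk_count n E 2 x y
    = (real b - real a) * of_bool (childB n E b a x y) + (real k - real a) * of_bool (x = y)
      + real a"
proof (cases "x = y")
  case True
  have "regular n E k" using dz by (simp add: deza_def)
  then show ?thesis
    using True walk_count_two[OF sg x y] common_nbrs_self[of n E k x] x by (simp add: childB_def)
next
  case False
  then have "common_nbrs n E x y = b \<or> common_nbrs n E x y = a" using dz x y by (simp add: deza_def)
  then show ?thesis using walk_count_two[OF sg x y] False ab x y by (auto simp: childB_def)
qed

lemma deza_childA_childB:
  assumes "deza n E k b a" "x < n" "y < n"
  shows "(of_bool (childA n E b a x y) :: real)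
    = 1 - of_bool (x = y) - of_bool (childB n E b a x y)"
  using assms by (cases "x = y") (auto simp: childA_def childB_def deza_def)

lemma strongly_regular_has_edge:
  assumes "strongly_regular n Z"
  obtains x y where "Z x y"
  using assms unfolding strongly_regular_def srg_def edgeless_def by blast

lemma strongly_deza_values:
  assumes "strongly_deza n E k b a"
  shows "a < b"
    and "\<exists>x<n. \<exists>y<n. x \<noteq> y \<and> common_nbrs n E x y = b"
    and "\<exists>x<n. \<exists>y<n. x \<noteq> y \<and> common_nbrs n E x y = a"
proof -
  have "strongly_regular n (childA n E b a)" "strongly_regular n (childB n E b a)"
    using assms by (simp_all add: strongly_deza_def)
  then obtain x y u v where B: "childB n E b a x y" and A: "childA n E b a u v"
    by (metis strongly_regular_has_edge)
  from B show ab: "a < b" by (auto simp: childB_def split: if_splits)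
  show "\<exists>x<n. \<exists>y<n. x \<noteq> y \<and> common_nbrs n E x y = b"
    using B ab by (auto simp: childB_def)
  show "\<exists>x<n. \<exists>y<n. x \<noteq> y \<and> common_nbrs n E x y = a"
    using A ab by (auto simp: childA_def)
qed

lemma strongly_deza_walk_count_four_quadratic:
  assumes sg: "simple_graph n E" and sd: "strongly_deza n E k b a"
  obtains p q r where "\<And>x y. x < n \<Longrightarrow> y < n \<Longrightarrow>
    walk_count n E 4 x y = p * walk_count n E 2 x y + q * of_bool (x = y) + r"
proof -
  have dz: "deza n E k b a" and srgB: "strongly_regular n (childB n E b a)"
    using sd by (auto simp: strongly_deza_def)
  have ab: "a < b" using strongly_deza_values(1)[OF sd] .
  obtain s p q r where row:
    "\<And>x. x < n \<Longrightarrow> (\<Sum>z<n. of_bool (childB n E b a x z) :: real) = s"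
    and col: "\<And>y. y < n \<Longrightarrow> (\<Sum>z<n. of_bool (childB n E b a z y) :: real) = s"
    and quad: "\<And>x y. x < n \<Longrightarrow> y < n \<Longrightarrow>
      (\<Sum>z<n. of_bool (childB n E b a x z) * of_bool (childB n E b a z y) :: real)
        = p * of_bool (childB n E b a x y) + q * of_bool (x = y) + r"
    by (rule strongly_regular_quadratic[OF srgB]) blast
  have "\<exists>p' q' r'. \<forall>x<n. \<forall>y<n. (\<Sum>z<n. walk_count n E 2 x z * walk_count n E 2 z y)
      = p' * walk_count n E 2 x y + q' * of_bool (x = y) + r'"
    by (rule quadratic_identity_affine[where F="\<lambda>x y. of_bool (childB n E b a x y)"
          and u="real b - real a" and v="real k - real a" and w="real a"])
      (use deza_walk_count_two[OF sg dz ab] row col quad ab in auto)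
  then obtain p' q' r' where "\<forall>x<n. \<forall>y<n. (\<Sum>z<n. walk_count n E 2 x z * walk_count n E 2 z y)
      = p' * walk_count n E 2 x y + q' * of_bool (x = y) + r'"
    by blast
  moreover have "walk_count n E 4 x y = (\<Sum>z<n. walk_count n E 2 x z * walk_count n E 2 z y)"
    if "x < n" for x y
    using walk_count_add[OF sg that, of 2 2 y] by simp
  ultimately show ?thesis using that by simp
qed

lemma deza_values_transfer:
  assumes sg: "simple_graph n E" and dz: "deza n E k b a" and "a < b"
    and "\<exists>x<n. \<exists>y<n. x \<noteq> y \<and> common_nbrs n E x y = b"
    and "\<exists>x<n. \<exists>y<n. x \<noteq> y \<and> common_nbrs n E x y = a"
    and sg': "simple_graph n E'" and dz': "deza n E' k b' a'"
    and closed: "\<And>m. closed_walks n E m = closed_walks n E' m"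
  shows "a' < b'"
    and "\<exists>x<n. \<exists>y<n. x \<noteq> y \<and> common_nbrs n E' x y = b'"
    and "\<exists>x<n. \<exists>y<n. x \<noteq> y \<and> common_nbrs n E' x y = a'"
proof -
  have reg: "regular n E k" and reg': "regular n E' k" using dz dz' by (auto simp: deza_def)
  have nonconst: "\<exists>x<n. \<exists>y<n. x \<noteq> y \<and> common_nbrs n E' x y \<noteq> t" for t
  proof (rule ccontr)
    assume "\<not> ?thesis"
    then have "common_nbrs n E x y = t" if "x < n" "y < n" "x \<noteq> y" for x y
      using common_nbrs_const_transfer[OF sg' reg' sg reg closed[symmetric]] that by blast
    then show False using assms(3-5) by force
  qed
  have values': "common_nbrs n E' x y = b' \<or> common_nbrs n E' x y = a'"
    if "x < n" "y < n" "x \<noteq> y" for x y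
    using dz' that by (simp add: deza_def)
  show b': "\<exists>x<n. \<exists>y<n. x \<noteq> y \<and> common_nbrs n E' x y = b'"
    using nonconst[of a'] values' by blast
  show "\<exists>x<n. \<exists>y<n. x \<noteq> y \<and> common_nbrs n E' x y = a'"
    using nonconst[of b'] values' by blast
  have "b' \<noteq> a'" using nonconst[of a'] values' by blast
  then show "a' < b'" using dz' by (simp add: deza_def)
qed

lemma strongly_deza_of_walk_count_four_quadratic:
  assumes sg: "simple_graph n E" and dz: "deza n E k b a" and ab: "a < b"
    and "\<exists>x<n. \<exists>y<n. x \<noteq> y \<and> common_nbrs n E x y = b"
    and "\<exists>x<n. \<exists>y<n. x \<noteq> y \<and> common_nbrs n E x y = a"
    and quad: "\<And>x y. x < n \<Longrightarrow> y < n \<Longrightarrow>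
      walk_count n E 4 x y = p * walk_count n E 2 x y + q * of_bool (x = y) + r"
  shows "strongly_deza n E k b a"
proof -
  have reg: "regular n E k" using dz by (simp add: deza_def)
  define d where "d = real b - real a"
  have d: "d > 0" using ab by (simp add: d_def)
  have B: "of_bool (childB n E b a x y)
      = (1 / d) * walk_count n E 2 x y + (- (real k - real a) / d) * of_bool (x = y)
        + (- real a / d)"
    if "x < n" "y < n" for x y
  proof -
    have "walk_count n E 2 x y
        = d * of_bool (childB n E b a x y) + (real k - real a) * of_bool (x = y) + real a"
      using deza_walk_count_two[OF sg dz ab that] by (simp add: d_def)
    then show ?thesis using d by (simp add: field_simps)
  qed
  have A: "of_bool (childA n E b a x y)
      = (- 1 / d) * walk_count n E 2 x y + ((real k - real a) / d - 1) * of_bool (x = y)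
        + (1 + real a / d)"
    if "x < n" "y < n" for x y
    unfolding deza_childA_childB[OF dz that] B[OF that] using d by (simp add: field_simps)
  obtain x1 y1 where xy1: "x1 < n" "y1 < n" "x1 \<noteq> y1" "common_nbrs n E x1 y1 = b"
    using assms(4) by blast
  obtain x2 y2 where xy2: "x2 < n" "y2 < n" "x2 \<noteq> y2" "common_nbrs n E x2 y2 = a"
    using assms(5) by blast
  have "strongly_regular n (childB n E b a)"
    by (rule strongly_regular_of_affine_in_square[OF sg reg quad B _ simple_graph_childB,
          of x1 y1 x2 y2]) (use d xy1 xy2 ab in \<open>auto simp: childB_def\<close>)
  moreover have "strongly_regular n (childA n E b a)"
    by (rule strongly_regular_of_affine_in_square[OF sg reg quad A _ simple_graph_childA,
          of x2 y2 x1 y1]) (use d xy1 xy2 ab in \<open>auto simp: childA_def\<close>)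
  ultimately show ?thesis using dz unfolding strongly_deza_def by blast
qed

lemma strongly_deza_transfer:
  assumes sg: "simple_graph n E" and sd: "strongly_deza n E k b a"
    and sg': "simple_graph n E'" and dz': "deza n E' k b' a'"
    and closed: "\<And>m. closed_walks n E m = closed_walks n E' m"
  shows "strongly_deza n E' k b' a'"
proof -
  have dz: "deza n E k b a" using sd by (simp add: strongly_deza_def)
  have reg: "regular n E k" and reg': "regular n E' k" using dz dz' by (auto simp: deza_def)
  note values' = deza_values_transfer[OF sg dz strongly_deza_values[OF sd] sg' dz' closed]
  obtain p q r where "\<And>x y. x < n \<Longrightarrow> y < n \<Longrightarrow>
      walk_count n E 4 x y = p * walk_count n E 2 x y + q * of_bool (x = y) + r"
    using strongly_deza_walk_count_four_quadratic[OF sg sd] by blast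
  then have "walk_count n E' 4 x y = p * walk_count n E' 2 x y + q * of_bool (x = y) + r"
    if "x < n" "y < n" for x y
    using walk_count_four_quadratic_transfer[OF sg reg sg' reg' closed] that by blast
  then show ?thesis by (rule strongly_deza_of_walk_count_four_quadratic[OF sg' dz' values'])
qed

section \<open>Distances\<close>

lemma walk_one: "simple_graph n E \<Longrightarrow> walk n E 1 x y \<longleftrightarrow> E x y"
  by (auto simp: simple_graph_def)

lemma walk_two: "simple_graph n E \<Longrightarrow> walk n E 2 x y \<longleftrightarrow> (\<exists>z<n. E x z \<and> E z y)"
  by (auto simp: simple_graph_def numeral_2_eq_2)

lemma walk_three: "walk n E 3 x y \<longleftrightarrow> (\<exists>z<n. E x z \<and> walk n E 2 z y)"
  by (simp add: numeral_3_eq_3 numeral_2_eq_2)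

lemma gdist_le: "walk n E m x y \<Longrightarrow> gdist n E x y \<le> m"
  unfolding gdist_def by (rule Least_le)

lemma walk_gdist: "walk n E m x y \<Longrightarrow> walk n E (gdist n E x y) x y"
  unfolding gdist_def by (rule LeastI)

lemma gdist_eqI: "walk n E m x y \<Longrightarrow> (\<And>j. j < m \<Longrightarrow> \<not> walk n E j x y) \<Longrightarrow> gdist n E x y = m"
  unfolding gdist_def by (rule Least_equality) (auto simp: not_less[symmetric])

lemma gdist_self: "gdist n E x x = 0"
  by (rule gdist_eqI[of _ _ 0]) auto

lemma common_nbrs_pos_iff:
  assumes "simple_graph n E"
  shows "0 < common_nbrs n E x y \<longleftrightarrow> (\<exists>z<n. E x z \<and> E z y)"
proof -
  have "0 < common_nbrs n E x y \<longleftrightarrow> {z. z < n \<and> E x z \<and> E y z} \<noteq> {}"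
    unfolding common_nbrs_def by (subst card_gt_0_iff) auto
  also have "\<dots> \<longleftrightarrow> (\<exists>z<n. E x z \<and> E z y)" using assms unfolding simple_graph_def by blast
  finally show ?thesis .
qed

lemma gdist_eq_0_iff: "walk n E m x y \<Longrightarrow> gdist n E x y = 0 \<longleftrightarrow> x = y"
  using walk_gdist[of n E m x y] by (auto simp: gdist_self)

lemma gdist_eq_1_iff:
  assumes sg: "simple_graph n E" and "walk n E m x y"
  shows "gdist n E x y = 1 \<longleftrightarrow> E x y"
proof
  assume "gdist n E x y = 1"
  then show "E x y" using walk_gdist[OF assms(2)] walk_one[OF sg] by metis
next
  assume "E x y"
  then show "gdist n E x y = 1"
    using sg walk_one[OF sg] by (intro gdist_eqI[of _ _ 1]) (auto simp: simple_graph_def)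
qed

lemma gdist_eq_2:
  assumes sg: "simple_graph n E" and "x \<noteq> y" "\<not> E x y" "0 < common_nbrs n E x y"
  shows "gdist n E x y = 2"
proof (rule gdist_eqI)
  show "walk n E 2 x y" using walk_two[OF sg] common_nbrs_pos_iff[OF sg] assms(4) by blast
  fix j :: nat assume "j < 2"
  then have "j = 0 \<or> j = 1" by auto
  then show "\<not> walk n E j x y" using assms(2,3) walk_one[OF sg, of x y] by auto
qed

lemma gdist_ge_3:
  assumes sg: "simple_graph n E" and "x \<noteq> y" "\<not> E x y" "common_nbrs n E x y = 0"
    and "walk n E m x y"
  shows "3 \<le> gdist n E x y"
proof -
  have w: "walk n E (gdist n E x y) x y" using walk_gdist[OF assms(5)] .
  have "gdist n E x y \<noteq> 0" using w assms(2) by (metis walk.simps(1))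
  moreover have "gdist n E x y \<noteq> 1" using w assms(3) walk_one[OF sg] by metis
  moreover have "gdist n E x y \<noteq> 2"
    using w assms(4) walk_two[OF sg] common_nbrs_pos_iff[OF sg] by (metis less_irrefl)
  ultimately show ?thesis by linarith
qed

lemma distance_regular_connected:
  assumes "distance_regular n E d ai bi ci" "x < n" "y < n"
  obtains m where "walk n E m x y"
  using assms unfolding distance_regular_def has_diameter_def connected_graph_def by blast

lemma distance_regular_common_nbrs_adj:
  assumes dr: "distance_regular n E d ai bi ci" and "E x y"
  shows "common_nbrs n E x y = ai 1"
proof -
  have sg: "simple_graph n E" using dr by (simp add: distance_regular_def)
  then have x: "x < n" and y: "y < n" using assms(2) by (auto simp: simple_graph_def)
  have gdist1: "gdist n E u v = 1 \<longleftrightarrow> E u v" if "u < n" "v < n" for u v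
    using gdist_eq_1_iff[OF sg] distance_regular_connected[OF dr that] by metis
  have "card {z. z < n \<and> E y z \<and> gdist n E x z = gdist n E x y} = ai (gdist n E x y)"
    using dr x y unfolding distance_regular_def Let_def by blast
  moreover have "{z. z < n \<and> E y z \<and> gdist n E x z = 1} = {z. z < n \<and> E x z \<and> E y z}"
    using gdist1[OF x] by auto
  ultimately show ?thesis using gdist1[OF x y] assms(2) by (simp add: common_nbrs_def)
qed

section \<open>Deza graphs with parameters (n, k, c, 0) shaped like distance-regular graphs\<close>

definition two_apart :: "nat \<Rightarrow> (nat \<Rightarrow> nat \<Rightarrow> bool) \<Rightarrow> nat \<Rightarrow> nat \<Rightarrow> nat \<Rightarrow> bool" where
  "two_apart n E c x y \<longleftrightarrow> x \<noteq> y \<and> \<not> E x y \<and> common_nbrs n E x y = c"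

definition three_apart :: "nat \<Rightarrow> (nat \<Rightarrow> nat \<Rightarrow> bool) \<Rightarrow> nat \<Rightarrow> nat \<Rightarrow> bool" where
  "three_apart n E x y \<longleftrightarrow> x \<noteq> y \<and> common_nbrs n E x y = 0"

definition layer :: "nat \<Rightarrow> (nat \<Rightarrow> nat \<Rightarrow> bool) \<Rightarrow> nat \<Rightarrow> nat \<Rightarrow> nat \<Rightarrow> nat" where
  "layer n E c x y =
    (if x = y then 0 else if E x y then 1 else if two_apart n E c x y then 2 else 3)"

text \<open>In the graphs of the locale below, the 0/1 matrices of \<open>three_apart\<close> and \<open>two_apart\<close>
  are ((k - c) I + c J - A^2) / c and J - I - A minus the former; substituting them into the number
  of neighbours of x that are three apart from y yields the cubic with these coefficients.\<close>

definition three_apart_poly :: "nat \<Rightarrow> nat \<Rightarrow> nat \<Rightarrow> nat \<Rightarrow> nat \<Rightarrow> real" where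
  "three_apart_poly k c b2 a3 i =
    (if i = 0 then real b2 - (real a3 - real b2) * (real k - real c) / real c
     else if i = 1 then (real k - real c) / real c + real b2
     else if i = 2 then (real a3 - real b2) / real c
     else if i = 3 then - 1 / real c else 0)"

locale deza_c_zero =
  fixes n :: nat and E :: "nat \<Rightarrow> nat \<Rightarrow> bool" and k c :: nat
  assumes simple: "simple_graph n E" and reg: "regular n E k" and c_pos: "0 < c"
    and common_nbrs_cases: "\<And>x y. x < n \<Longrightarrow> y < n \<Longrightarrow> x \<noteq> y \<Longrightarrow>
      common_nbrs n E x y = c \<or> common_nbrs n E x y = 0"
    and common_nbrs_adj: "\<And>x y. E x y \<Longrightarrow> common_nbrs n E x y = c"
begin

lemma adj_sym: "E x y = E y x"
  using simple unfolding simple_graph_def by blast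

lemma adj_bound: "E x y \<Longrightarrow> x < n \<and> y < n \<and> x \<noteq> y"
  using simple unfolding simple_graph_def by blast

lemma two_apart_sym: "two_apart n E c x y = two_apart n E c y x"
  unfolding two_apart_def using common_nbrs_sym adj_sym by metis

lemma three_apart_sym: "three_apart n E x y = three_apart n E y x"
  unfolding three_apart_def using common_nbrs_sym by metis

lemma three_apart_not_adj: "three_apart n E x y \<Longrightarrow> \<not> E x y"
  using common_nbrs_adj c_pos unfolding three_apart_def by force

lemma three_apart_not_two_apart: "three_apart n E x y \<Longrightarrow> \<not> two_apart n E c x y"
  using c_pos unfolding three_apart_def two_apart_def by auto

lemma pair_cases:
  assumes "x < n" "y < n"
  obtains "x = y" | "x \<noteq> y" "E x y" | "two_apart n E c x y" | "three_apart n E x y"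
  using common_nbrs_cases[OF assms] unfolding two_apart_def three_apart_def by auto

lemma layer_le_3: "layer n E c x y \<le> 3"
  unfolding layer_def by auto

lemma layer_eq_3_iff:
  assumes "x < n" "y < n"
  shows "layer n E c x y = 3 \<longleftrightarrow> three_apart n E x y"
proof (cases rule: pair_cases[OF assms])
  case 1
  then show ?thesis by (simp add: layer_def three_apart_def)
next
  case 2
  then show ?thesis using three_apart_not_adj by (auto simp: layer_def)
next
  case 3
  then have "\<not> three_apart n E x y" using three_apart_not_two_apart by blast
  then show ?thesis using 3 by (auto simp: layer_def two_apart_def)
next
  case 4
  then show ?thesis
    using three_apart_not_adj three_apart_not_two_apart by (auto simp: layer_def three_apart_def)
qed

lemma of_bool_three_apart:
  assumes "x < n" "y < n"
  shows "of_bool (three_apart n E x y)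
    = ((real k - real c) * of_bool (x = y) + real c - walk_count n E 2 x y) / real c"
  using assms walk_count_two[OF simple assms] common_nbrs_self[OF reg assms(1)] c_pos
    common_nbrs_cases[OF assms]
  by (cases "x = y") (auto simp: three_apart_def)

lemma of_bool_two_apart:
  assumes "x < n" "y < n"
  shows "of_bool (two_apart n E c x y)
    = 1 - of_bool (x = y) - walk_count n E 1 x y - of_bool (three_apart n E x y)"
  using assms
  by (cases rule: pair_cases)
    (auto simp: walk_count_one three_apart_not_adj dest: three_apart_not_two_apart adj_bound,
      auto simp: two_apart_def three_apart_def)

lemma card_adj_three_apart:
  assumes x: "x < n" and y: "y < n"
  shows "real (card {z. z < n \<and> E x z \<and> three_apart n E z y})
    = ((real k - real c) * walk_count n E 1 x y + real c * real k - walk_count n E 3 x y) / real c"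
proof -
  let ?w = "walk_count n E"
  have "real (card {z. z < n \<and> E x z \<and> three_apart n E z y})
      = (\<Sum>z<n. ?w 1 x z * (((real k - real c) * of_bool (z = y) + real c - ?w 2 z y) / real c))"
    unfolding real_card_eq_sum_of_bool
  proof (intro sum.cong refl)
    fix z assume "z \<in> {..<n}"
    then show "of_bool (E x z \<and> three_apart n E z y)
        = ?w 1 x z * (((real k - real c) * of_bool (z = y) + real c - ?w 2 z y) / real c)"
      by (simp only: of_bool_conj walk_count_one[OF x] of_bool_three_apart[OF _ y, symmetric]
          lessThan_iff)
  qed
  also have "\<dots> = (\<Sum>z<n. (real k - real c) * (?w 1 x z * of_bool (z = y))
      + real c * ?w 1 x z - ?w 1 x z * ?w 2 z y) / real c"
    unfolding sum_divide_distrib by (intro sum.cong refl) (simp add: field_simps del: of_bool_eq)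
  also have "(\<Sum>z<n. (real k - real c) * (?w 1 x z * of_bool (z = y))
      + real c * ?w 1 x z - ?w 1 x z * ?w 2 z y)
      = (real k - real c) * (\<Sum>z<n. ?w 1 x z * of_bool (z = y))
      + real c * (\<Sum>z<n. ?w 1 x z) - (\<Sum>z<n. ?w 1 x z * ?w 2 z y)"
    by (simp only: sum.distrib sum_subtractf sum_distrib_left)
  also have "(\<Sum>z<n. ?w 1 x z * of_bool (z = y)) = ?w 1 x y" using y by simp
  also have "(\<Sum>z<n. ?w 1 x z) = real k" using walk_count_row_sum[OF reg x, of 1] by simp
  also have "(\<Sum>z<n. ?w 1 x z * ?w 2 z y) = ?w 3 x y"
    using walk_count_add[OF simple x, of 1 2 y] by (simp add: numeral_3_eq_3 del: walk_count.simps)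
  finally show ?thesis .
qed

lemma three_apart_count_walk_poly:
  assumes "x < n" "y < n"
  shows "real (card {z. z < n \<and> E x z \<and> three_apart n E z y})
      - (real b2 * of_bool (two_apart n E c x y) + real a3 * of_bool (three_apart n E x y))
    = walk_poly n E (three_apart_poly k c b2 a3) 4 x y + (real k - real a3)"
proof -
  have "real c \<noteq> 0" using c_pos by simp
  then show ?thesis
    unfolding card_adj_three_apart[OF assms] of_bool_two_apart[OF assms]
      of_bool_three_apart[OF assms]
    by (simp add: walk_poly_def eval_nat_numeral three_apart_poly_def field_simps)
qed

lemma closed_walks_three_const: "closed_walks n E 3 = real n * real k * real c"
proof -
  have "closed_walks n E 3 = (\<Sum>x<n. \<Sum>z<n. of_bool (E x z) * real c)"
    unfolding closed_walks_three[OF simple]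
    by (intro sum.cong refl) (auto simp: common_nbrs_adj simp del: sum_of_bool_mult_eq)
  then show ?thesis by (simp only: sum_sum_adj_const[OF reg])
qed

lemma gdist_eq_2_iff:
  assumes "walk n E m x y" "x < n" "y < n"
  shows "gdist n E x y = 2 \<longleftrightarrow> two_apart n E c x y"
proof
  assume g: "gdist n E x y = 2"
  then have ne: "x \<noteq> y" "\<not> E x y"
    using gdist_eq_0_iff[OF assms(1)] gdist_eq_1_iff[OF simple assms(1)] by auto
  moreover have "common_nbrs n E x y \<noteq> 0"
    using gdist_ge_3[OF simple ne _ assms(1)] g by auto
  ultimately show "two_apart n E c x y"
    using common_nbrs_cases[OF assms(2,3)] by (auto simp: two_apart_def)
next
  assume "two_apart n E c x y"
  then show "gdist n E x y = 2" using gdist_eq_2[OF simple] c_pos by (auto simp: two_apart_def)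
qed

lemma gdist_eq_3_iff:
  assumes "walk n E m x y" "gdist n E x y \<le> 3"
  shows "gdist n E x y = 3 \<longleftrightarrow> three_apart n E x y"
proof
  assume g: "gdist n E x y = 3"
  then have ne: "x \<noteq> y" "\<not> E x y"
    using gdist_eq_0_iff[OF assms(1)] gdist_eq_1_iff[OF simple assms(1)] by auto
  moreover have "common_nbrs n E x y = 0"
    using gdist_eq_2[OF simple ne] g by (metis neq0_conv numeral_eq_iff semiring_norm(89))
  ultimately show "three_apart n E x y" by (simp add: three_apart_def)
next
  assume xy: "three_apart n E x y"
  then have "3 \<le> gdist n E x y"
    using gdist_ge_3[OF simple _ three_apart_not_adj[OF xy] _ assms(1)]
    by (simp add: three_apart_def)
  then show "gdist n E x y = 3" using assms(2) by simp
qed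

lemma three_apart_count_of_distance_regular:
  assumes dr: "distance_regular n E 3 ai bi ci" and x: "x < n" and y: "y < n"
  shows "real (card {z. z < n \<and> E x z \<and> three_apart n E z y})
    = real (bi 2) * of_bool (two_apart n E c x y) + real (ai 3) * of_bool (three_apart n E x y)"
proof -
  have le3: "gdist n E u v \<le> 3" if "u < n" "v < n" for u v
    using dr that by (simp add: distance_regular_def has_diameter_def)
  have gdist_3: "gdist n E u v = 3 \<longleftrightarrow> three_apart n E u v" if "u < n" "v < n" for u v
    using gdist_eq_3_iff[OF _ le3[OF that]] distance_regular_connected[OF dr that] by metis
  have set_eq: "{z. z < n \<and> E x z \<and> three_apart n E z y} = {z. z < n \<and> E x z \<and> gdist n E y z = 3}"
    using gdist_3[OF y] three_apart_sym by blast
  have count: "card {z. z < n \<and> E x z \<and> gdist n E y z = gdist n E y x + 1} = bi (gdist n E y x)"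
    "card {z. z < n \<and> E x z \<and> gdist n E y z = gdist n E y x} = ai (gdist n E y x)"
    using dr x y unfolding distance_regular_def Let_def by blast+
  show ?thesis
  proof (cases rule: pair_cases[OF x y])
    case 1
    then have "{z. z < n \<and> E x z \<and> three_apart n E z y} = {}"
      using three_apart_not_adj adj_sym by blast
    then show ?thesis using 1 by (simp add: two_apart_def three_apart_def)
  next
    case 2
    have "\<not> three_apart n E z y" if "E x z" for z
    proof -
      have "0 < common_nbrs n E z y"
        using common_nbrs_pos_iff[OF simple, of z y] x that 2 adj_sym by blast
      then show ?thesis by (simp add: three_apart_def)
    qed
    then have "{z. z < n \<and> E x z \<and> three_apart n E z y} = {}" by blast
    moreover have "\<not> three_apart n E x y" using 2 three_apart_not_adj by blast
    ultimately show ?thesis using 2 by (simp add: two_apart_def)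
  next
    case 3
    then have "gdist n E y x = 2"
      using gdist_eq_2_iff[OF _ y x] distance_regular_connected[OF dr y x] two_apart_sym by metis
    then show ?thesis using 3 count(1) set_eq three_apart_not_two_apart by auto
  next
    case 4
    then have "gdist n E y x = 3" using gdist_3[OF y x] three_apart_sym by blast
    then show ?thesis using 4 count(2) set_eq three_apart_not_two_apart by auto
  qed
qed

end

lemma deza_c_zero_of_closed_walks_three:
  assumes sg: "simple_graph n E" and reg: "regular n E k" and c_pos: "0 < c"
    and cases: "\<And>x y. x < n \<Longrightarrow> y < n \<Longrightarrow> x \<noteq> y \<Longrightarrow>
      common_nbrs n E x y = c \<or> common_nbrs n E x y = 0"
    and closed: "closed_walks n E 3 = real n * real k * real c"
  shows "deza_c_zero n E k c"
proof (rule deza_c_zero.intro[OF sg reg c_pos cases])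
  fix x y assume e: "E x y"
  define g where "g u v = of_bool (E u v) * (real c - real (common_nbrs n E u v))" for u v
  have g_nonneg: "0 \<le> g u v" for u v
    using sg cases[of u v] unfolding g_def simple_graph_def by (cases "E u v") auto
  have "(\<Sum>u<n. \<Sum>v<n. g u v)
      = (\<Sum>u<n. \<Sum>v<n. of_bool (E u v) * real c) - closed_walks n E 3"
    unfolding g_def closed_walks_three[OF sg]
    by (simp add: right_diff_distrib sum_subtractf del: sum_mult_of_bool_eq sum_of_bool_mult_eq)
  also have "(\<Sum>u<n. \<Sum>v<n. of_bool (E u v) * real c) = real n * real k * real c"
    by (rule sum_sum_adj_const[OF reg])
  finally have "(\<Sum>u<n. \<Sum>v<n. g u v) = 0" using closed by simp
  moreover have "x < n" "y < n" using e sg by (auto simp: simple_graph_def)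
  ultimately have "(\<Sum>v<n. g x v) = 0"
    using g_nonneg by (subst (asm) sum_nonneg_eq_0_iff) (auto intro: sum_nonneg)
  then have "g x y = 0"
    using g_nonneg \<open>y < n\<close> by (subst (asm) sum_nonneg_eq_0_iff) auto
  then show "common_nbrs n E x y = c" using e by (simp add: g_def)
qed

lemma deza_c_zero_of_distance_regular:
  assumes dr: "distance_regular n E d ai bi ci" and "ai 1 = c"
    and "deza n E k c 0" and "0 < c"
  shows "deza_c_zero n E k c"
  using assms distance_regular_common_nbrs_adj[OF dr]
  by unfold_locales (auto simp: deza_def distance_regular_def)

text \<open>The intersection numbers of a distance-regular graph of diameter 3 with a1 = c2 = c are
  determined by k, c, b2 and a3.\<close>

definition drg3_b :: "nat \<Rightarrow> nat \<Rightarrow> nat \<Rightarrow> nat \<Rightarrow> nat \<Rightarrow> real" where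
  "drg3_b k c b2 a3 i =
    (if i = 0 then real k else if i = 1 then real k - 1 - real c else if i = 2 then real b2 else 0)"

definition drg3_a :: "nat \<Rightarrow> nat \<Rightarrow> nat \<Rightarrow> nat \<Rightarrow> nat \<Rightarrow> real" where
  "drg3_a k c b2 a3 i =
    (if i = 0 then 0 else if i = 1 then real c else if i = 2 then real k - real c - real b2
     else real a3)"

definition drg3_c :: "nat \<Rightarrow> nat \<Rightarrow> nat \<Rightarrow> nat \<Rightarrow> nat \<Rightarrow> real" where
  "drg3_c k c b2 a3 i =
    (if i = 0 then 0 else if i = 1 then 1 else if i = 2 then real c else real k - real a3)"

locale drg3_deza = deza_c_zero +
  fixes b2 a3 :: nat
  assumes three_apart_count: "\<And>x y. x < n \<Longrightarrow> y < n \<Longrightarrow>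
      real (card {z. z < n \<and> E x z \<and> three_apart n E z y})
        = real b2 * of_bool (two_apart n E c x y) + real a3 * of_bool (three_apart n E x y)"
    and a3_less: "a3 < k"
    and three_apart_exists: "\<exists>x<n. \<exists>y<n. three_apart n E x y"
begin

lemma three_apart_adj_two_apart:
  assumes x: "x < n" and y: "y < n" and xy: "three_apart n E x y"
  obtains z where "z < n" "E x z" "two_apart n E c z y"
proof -
  have "card {z. z < n \<and> E x z \<and> three_apart n E z y} = a3"
    using three_apart_count[OF x y] xy three_apart_not_two_apart[OF xy] by simp
  moreover have "card {z. z < n \<and> E x z} = k" using reg x unfolding regular_def by blast
  ultimately have "{z. z < n \<and> E x z \<and> three_apart n E z y} \<noteq> {z. z < n \<and> E x z}"
    using a3_less by (metis less_irrefl)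
  then obtain z where z: "z < n" "E x z" "\<not> three_apart n E z y" by blast
  have "z \<noteq> y" using z(2) three_apart_not_adj[OF xy] by auto
  moreover have "\<not> E z y"
  proof
    assume "E z y"
    then have "0 < common_nbrs n E x y" using common_nbrs_pos_iff[OF simple] z by blast
    then show False using xy unfolding three_apart_def by simp
  qed
  ultimately have "two_apart n E c z y"
    using z(3) by (cases rule: pair_cases[OF z(1) y]) auto
  then show thesis using that z by blast
qed

lemma gdist_layer:
  assumes x: "x < n" and y: "y < n"
  shows "gdist n E x y = layer n E c x y" and "walk n E (layer n E c x y) x y"
proof -
  have "gdist n E x y = layer n E c x y \<and> walk n E (layer n E c x y) x y"
  proof (cases rule: pair_cases[OF x y])
    case 1
    then show ?thesis by (simp add: gdist_self layer_def)
  next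
    case 2
    then show ?thesis
      using walk_one[OF simple, of x y] gdist_eq_1_iff[OF simple, of 1 x y] by (simp add: layer_def)
  next
    case 3
    then have "0 < common_nbrs n E x y" using c_pos by (simp add: two_apart_def)
    then show ?thesis
      using 3 gdist_eq_2[OF simple] walk_two[OF simple] common_nbrs_pos_iff[OF simple]
      by (auto simp: layer_def two_apart_def)
  next
    case 4
    obtain z where z: "z < n" "E x z" "two_apart n E c z y"
      using three_apart_adj_two_apart[OF x y 4] .
    have "walk n E 2 z y"
      using z(3) c_pos walk_two[OF simple] common_nbrs_pos_iff[OF simple]
      by (auto simp: two_apart_def)
    then have w: "walk n E 3 x y" using walk_three z by blast
    have "3 \<le> gdist n E x y"
      using gdist_ge_3[OF simple _ three_apart_not_adj[OF 4] _ w] 4 by (auto simp: three_apart_def)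
    then show ?thesis using gdist_le[OF w] w layer_eq_3_iff[OF x y] 4 by simp
  qed
  then show "gdist n E x y = layer n E c x y" and "walk n E (layer n E c x y) x y" by auto
qed

lemma layer_realized:
  assumes "i \<le> 3"
  shows "\<exists>x<n. \<exists>y<n. layer n E c x y = i"
proof -
  obtain x y where xy: "x < n" "y < n" "three_apart n E x y" using three_apart_exists by blast
  obtain z where z: "z < n" "E x z" "two_apart n E c z y"
    using three_apart_adj_two_apart[OF xy] .
  have "layer n E c x x = 0" "layer n E c x z = 1" "layer n E c z y = 2" "layer n E c x y = 3"
    using z xy adj_bound layer_eq_3_iff by (auto simp: layer_def two_apart_def)
  moreover have "i = 0 \<or> i = 1 \<or> i = 2 \<or> i = 3" using assms by linarith
  ultimately show ?thesis using xy z by blast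
qed

lemma card_adj_layer_0:
  assumes "x < n"
  shows "real (card {z. z < n \<and> E y z \<and> layer n E c x z = 0}) = of_bool (E y x)"
proof -
  have "{z. z < n \<and> E y z \<and> layer n E c x z = 0} = (if E y x then {x} else {})"
    using assms by (auto simp: layer_def split: if_splits)
  then show ?thesis by simp
qed

lemma card_adj_layer_1:
  "real (card {z. z < n \<and> E y z \<and> layer n E c x z = 1}) = real (common_nbrs n E x y)"
proof -
  have "{z. z < n \<and> E y z \<and> layer n E c x z = 1} = {z. z < n \<and> E x z \<and> E y z}"
    using adj_bound by (auto simp: layer_def split: if_splits)
  then show ?thesis by (simp add: common_nbrs_def)
qed

lemma card_adj_layer_3:
  assumes "x < n" "y < n"
  shows "real (card {z. z < n \<and> E y z \<and> layer n E c x z = 3})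
    = real b2 * of_bool (two_apart n E c x y) + real a3 * of_bool (three_apart n E x y)"
proof -
  have "{z. z < n \<and> E y z \<and> layer n E c x z = 3} = {z. z < n \<and> E y z \<and> three_apart n E z x}"
    using layer_eq_3_iff[OF assms(1)] three_apart_sym by blast
  then show ?thesis
    using three_apart_count[OF assms(2,1)] two_apart_sym[of y x] three_apart_sym[of y x] by simp
qed

lemma card_adj_layer_sum:
  assumes "y < n"
  shows "(\<Sum>j\<le>3. real (card {z. z < n \<and> E y z \<and> layer n E c x z = j})) = real k"
proof -
  have "(\<Sum>j\<le>3. real (card {z. z < n \<and> E y z \<and> layer n E c x z = j}))
      = (\<Sum>z<n. \<Sum>j\<le>3. of_bool (E y z \<and> layer n E c x z = j))"
    unfolding real_card_eq_sum_of_bool by (rule sum.swap)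
  also have "\<dots> = (\<Sum>z<n. of_bool (E y z))"
    using layer_le_3 by (intro sum.cong refl) (simp add: of_bool_conj sum_distrib_left[symmetric])
  also have "\<dots> = real k" using regular_sum_adj[OF reg assms] .
  finally show ?thesis .
qed

lemma layer_counts:
  assumes x: "x < n" and y: "y < n"
  shows "real (card {z. z < n \<and> E y z \<and> layer n E c x z = layer n E c x y + 1})
      = drg3_b k c b2 a3 (layer n E c x y)
    \<and> real (card {z. z < n \<and> E y z \<and> layer n E c x z = layer n E c x y})
      = drg3_a k c b2 a3 (layer n E c x y)
    \<and> real (card {z. z < n \<and> E y z \<and> layer n E c x z + 1 = layer n E c x y})
      = drg3_c k c b2 a3 (layer n E c x y)"
proof -
  define C where "C j = real (card {z. z < n \<and> E y z \<and> layer n E c x z = j})" for j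
  have sum: "C 0 + C 1 + C 2 + C 3 = real k"
    using card_adj_layer_sum[OF y, of x] by (simp add: C_def eval_nat_numeral atMost_Suc)
  have C0: "C 0 = of_bool (E y x)" using card_adj_layer_0[OF x] by (simp add: C_def)
  have C1: "C 1 = real (common_nbrs n E x y)" using card_adj_layer_1 by (simp add: C_def)
  have C3: "C 3 = real b2 * of_bool (two_apart n E c x y) + real a3 * of_bool (three_apart n E x y)"
    using card_adj_layer_3[OF x y] by (simp add: C_def)
  have "layer n E c x z \<noteq> 4" for z using layer_le_3[of x z] by linarith
  then have C4: "C 4 = 0" by (simp add: C_def)
  have below: "real (card {z. z < n \<and> E y z \<and> layer n E c x z + 1 = layer n E c x y}) = C j"
    if "layer n E c x y = j + 1" for j
    unfolding C_def that by simp
  have "C (layer n E c x y + 1) = drg3_b k c b2 a3 (layer n E c x y)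
      \<and> C (layer n E c x y) = drg3_a k c b2 a3 (layer n E c x y)
      \<and> real (card {z. z < n \<and> E y z \<and> layer n E c x z + 1 = layer n E c x y})
        = drg3_c k c b2 a3 (layer n E c x y)"
  proof (cases rule: pair_cases[OF x y])
    case 1
    then have "layer n E c x y = 0" "C 0 = 0" "C 1 = real k"
      using C0 C1 adj_bound common_nbrs_self[OF reg x] by (auto simp: layer_def)
    then show ?thesis by (simp add: drg3_b_def drg3_a_def drg3_c_def eval_nat_numeral)
  next
    case 2
    then have "layer n E c x y = 1" "C 0 = 1" "C 1 = real c" "C 3 = 0"
      using C0 C1 C3 adj_sym three_apart_not_adj common_nbrs_adj
      by (auto simp: layer_def two_apart_def)
    moreover from this have "C 2 = real k - 1 - real c" using sum by simp
    ultimately show ?thesis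
      using below[of 0] by (simp add: drg3_b_def drg3_a_def drg3_c_def eval_nat_numeral)
  next
    case 3
    then have "layer n E c x y = 2" "C 0 = 0" "C 1 = real c" "C 3 = real b2"
      using C0 C1 C3 adj_sym three_apart_not_two_apart
      by (auto simp: layer_def two_apart_def)
    moreover from this have "C 2 = real k - real c - real b2" using sum by simp
    ultimately show ?thesis
      using below[of 1] by (simp add: drg3_b_def drg3_a_def drg3_c_def eval_nat_numeral)
  next
    case 4
    then have "layer n E c x y = 3" "C 0 = 0" "C 1 = 0" "C 3 = real a3"
      using C0 C1 C3 adj_sym three_apart_not_adj three_apart_not_two_apart layer_eq_3_iff[OF x y]
      by (auto simp: three_apart_def)
    moreover from this have "C 2 = real k - real a3" using sum by simp
    ultimately show ?thesis
      using below[of 2] C4 by (simp add: drg3_b_def drg3_a_def drg3_c_def eval_nat_numeral)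
  qed
  then show ?thesis by (simp add: C_def)
qed

lemma card_adj_gdist_eq_layer:
  assumes "x < n"
  shows "card {z. z < n \<and> E y z \<and> P (gdist n E x z)}
    = card {z. z < n \<and> E y z \<and> P (layer n E c x z)}"
  by (intro arg_cong[where f=card] Collect_cong) (auto simp: gdist_layer(1)[OF assms])

lemma has_diameter_3: "has_diameter n E 3"
proof -
  obtain x0 y0 where xy0: "x0 < n" "y0 < n" "three_apart n E x0 y0"
    using three_apart_exists by blast
  have "0 < n" using xy0(1) by simp
  then have "connected_graph n E" unfolding connected_graph_def using gdist_layer(2) by blast
  moreover have "gdist n E x y \<le> 3" if "x < n" "y < n" for x y
    using gdist_layer(1)[OF that] layer_le_3 by simp
  moreover have "gdist n E x0 y0 = 3"
    using gdist_layer(1)[OF xy0(1,2)] layer_eq_3_iff[OF xy0(1,2)] xy0(3) by simp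
  ultimately show ?thesis unfolding has_diameter_def using xy0 by blast
qed

lemma distance_regular:
  assumes numbers: "\<And>i. i \<le> 3 \<Longrightarrow> real (bi i) = drg3_b k c b2 a3 i \<and>
      real (ai i) = drg3_a k c b2 a3 i \<and> real (ci i) = drg3_c k c b2 a3 i"
  shows "distance_regular n E 3 ai bi ci"
proof -
  have "let i = gdist n E x y in
      card {z. z < n \<and> E y z \<and> gdist n E x z = i + 1} = bi i \<and>
      card {z. z < n \<and> E y z \<and> gdist n E x z = i} = ai i \<and>
      card {z. z < n \<and> E y z \<and> gdist n E x z + 1 = i} = ci i"
    if x: "x < n" and y: "y < n" for x y
    using layer_counts[OF x y] numbers[OF layer_le_3[of x y]]
    unfolding Let_def gdist_layer(1)[OF x y]
      card_adj_gdist_eq_layer[OF x, where y=y and P="\<lambda>t. t = layer n E c x y + 1"]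
      card_adj_gdist_eq_layer[OF x, where y=y and P="\<lambda>t. t = layer n E c x y"]
      card_adj_gdist_eq_layer[OF x, where y=y and P="\<lambda>t. t + 1 = layer n E c x y"]
    by (simp flip: of_nat_eq_iff)
  then show ?thesis unfolding distance_regular_def using simple has_diameter_3 by blast
qed

lemma intersection_numbers:
  assumes "distance_regular n E 3 ai bi ci" and "i \<le> 3"
  shows "real (bi i) = drg3_b k c b2 a3 i \<and> real (ai i) = drg3_a k c b2 a3 i
    \<and> real (ci i) = drg3_c k c b2 a3 i"
proof -
  obtain x y where xy: "x < n" "y < n" "layer n E c x y = i"
    using layer_realized[OF assms(2)] by blast
  have "card {z. z < n \<and> E y z \<and> gdist n E x z = gdist n E x y + 1} = bi (gdist n E x y) \<and>
      card {z. z < n \<and> E y z \<and> gdist n E x z = gdist n E x y} = ai (gdist n E x y) \<and>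
      card {z. z < n \<and> E y z \<and> gdist n E x z + 1 = gdist n E x y} = ci (gdist n E x y)"
    using assms(1) xy(1,2) unfolding distance_regular_def Let_def by blast
  then have "card {z. z < n \<and> E y z \<and> layer n E c x z = i + 1} = bi i \<and>
      card {z. z < n \<and> E y z \<and> layer n E c x z = i} = ai i \<and>
      card {z. z < n \<and> E y z \<and> layer n E c x z + 1 = i} = ci i"
    unfolding gdist_layer(1)[OF xy(1,2)] xy(3)
      card_adj_gdist_eq_layer[OF xy(1), where y=y and P="\<lambda>t. t = i + 1"]
      card_adj_gdist_eq_layer[OF xy(1), where y=y and P="\<lambda>t. t = i"]
      card_adj_gdist_eq_layer[OF xy(1), where y=y and P="\<lambda>t. t + 1 = i"] .
  then show ?thesis using layer_counts[OF xy(1,2)] xy(3) by simp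
qed

lemma drg3_deza_transfer:
  assumes sg': "simple_graph n E'" and dz': "deza n E' k c 0"
    and closed: "\<And>m. closed_walks n E m = closed_walks n E' m"
    and "\<exists>x<n. \<exists>y<n. x \<noteq> y \<and> common_nbrs n E' x y = 0"
  shows "drg3_deza n E' k c b2 a3"
proof -
  have reg': "regular n E' k" using dz' by (simp add: deza_def)
  have cases': "common_nbrs n E' x y = c \<or> common_nbrs n E' x y = 0"
    if "x < n" "y < n" "x \<noteq> y" for x y
    using dz' that by (simp add: deza_def)
  have "closed_walks n E' 3 = real n * real k * real c"
    using closed[of 3] closed_walks_three_const by simp
  then interpret G': deza_c_zero n E' k c
    using deza_c_zero_of_closed_walks_three[OF sg' reg' c_pos cases'] by blast
  have "walk_poly n E (three_apart_poly k c b2 a3) 4 x y = real a3 - real k"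
    if "x < n" "y < n" for x y
    using three_apart_count_walk_poly[OF that, of b2 a3] three_apart_count[OF that] by simp
  then have "walk_poly n E' (three_apart_poly k c b2 a3) 4 x y = real a3 - real k"
    if "x < n" "y < n" for x y
    using walk_poly_const_transfer[OF simple reg sg' reg' closed] that by blast
  then have "real (card {z. z < n \<and> E' x z \<and> three_apart n E' z y})
      = real b2 * of_bool (two_apart n E' c x y) + real a3 * of_bool (three_apart n E' x y)"
    if "x < n" "y < n" for x y
    using G'.three_apart_count_walk_poly[OF that, of b2 a3] that by simp
  moreover have "\<exists>x<n. \<exists>y<n. three_apart n E' x y"
    using assms(4) by (auto simp: three_apart_def)
  ultimately show ?thesis using a3_less by unfold_locales auto
qed

end

lemma (in deza_c_zero) drg3_deza_of_distance_regular:
  assumes dr: "distance_regular n E 3 ai bi ci"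
  shows "drg3_deza n E k c (bi 2) (ai 3)"
proof -
  obtain x y where xy: "x < n" "y < n" "gdist n E x y = 3"
    using dr unfolding distance_regular_def has_diameter_def by blast
  obtain m where w: "walk n E m x y" using distance_regular_connected[OF dr xy(1,2)] .
  have far: "three_apart n E x y" using gdist_eq_3_iff[OF w] xy(3) by simp
  have "walk n E 3 x y" using walk_gdist[OF w] xy(3) by simp
  then obtain z where z: "z < n" "E x z" "walk n E 2 z y" using walk_three by blast
  have "gdist n E z y \<le> 2" using gdist_le[OF z(3)] .
  then have "\<not> three_apart n E z y" using gdist_eq_3_iff[OF z(3)] by simp
  then have "{w. w < n \<and> E x w \<and> three_apart n E w y} \<subset> {w. w < n \<and> E x w}" using z by blast
  then have "card {w. w < n \<and> E x w \<and> three_apart n E w y} < card {w. w < n \<and> E x w}"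
    by (intro psubset_card_mono) auto
  moreover have "card {w. w < n \<and> E x w \<and> three_apart n E w y} = ai 3"
    using three_apart_count_of_distance_regular[OF dr xy(1,2)] far three_apart_not_two_apart by simp
  ultimately have "ai 3 < k" using reg xy(1) unfolding regular_def by simp
  then show ?thesis
    using three_apart_count_of_distance_regular[OF dr] far xy by unfold_locales auto
qed

theorem proposition3:
  fixes n n' :: nat and E E' :: "nat \<Rightarrow> nat \<Rightarrow> bool"
    and ai bi ci :: "nat \<Rightarrow> nat" and k' b' a' :: nat
  assumes "distance_regular n E 3 ai bi ci"
    and "ai 1 = ci 2"
    and "strongly_deza n E (bi 0) (ci 2) 0"
    and "simple_graph n' E'"
    and "cospectral n E n' E'"
    and "deza n' E' k' b' a'"
  shows "strongly_deza n' E' k' b' a' \<and>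
         (distance_regular n' E' 3 ai bi ci \<or> (b', a') \<noteq> (ci 2, 0))"
proof -
  have sg: "simple_graph n E" and "0 < n"
    using assms(1) by (auto simp: distance_regular_def has_diameter_def connected_graph_def)
  have sd: "strongly_deza n E (bi 0) (ci 2) 0" by fact
  then have dz: "deza n E (bi 0) (ci 2) 0" by (simp add: strongly_deza_def)
  have n': "n' = n" and closed: "\<And>m. closed_walks n E m = closed_walks n E' m"
    using cospectral_closed_walks[OF assms(5)] by auto
  have sg': "simple_graph n E'" and dz': "deza n E' k' b' a'" using assms(4,6) n' by auto
  have k': "k' = bi 0"
    using regular_degree_eq_of_closed_walks[OF sg _ sg' _ closed \<open>0 < n\<close>] dz dz'
    by (auto simp: deza_def)
  have sd': "strongly_deza n E' (bi 0) b' a'"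
    using strongly_deza_transfer[OF sg sd sg'] dz' k' closed by simp
  have "distance_regular n E' 3 ai bi ci" if "(b', a') = (ci 2, 0)"
  proof -
    have "deza_c_zero n E (bi 0) (ci 2)"
      using deza_c_zero_of_distance_regular[OF assms(1,2) dz] strongly_deza_values(1)[OF sd] by simp
    then interpret G: drg3_deza n E "bi 0" "ci 2" "bi 2" "ai 3"
      using deza_c_zero.drg3_deza_of_distance_regular[OF _ assms(1)] by blast
    have "drg3_deza n E' (bi 0) (ci 2) (bi 2) (ai 3)"
      using G.drg3_deza_transfer[OF sg' _ closed] dz' k' strongly_deza_values(3)[OF sd'] that
      by simp
    then show ?thesis by (rule drg3_deza.distance_regular[OF _ G.intersection_numbers[OF assms(1)]])
  qed
  then show ?thesis using sd' n' k' by auto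
qed

end
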